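(* Let $X$ be a normed space and $Y$ a Banach space, and let $l\in\{-1,1\}$. Let $f:X\to Y$ be an odd mapping satisfying $\|D_f(x,y)\|\le\phi(x,y)$ for all $x,y\in X$, where $\phi:X\times X\to[0,\infty)$ is a function such that $$\sum_{i=1}^{\infty}2^{il}\phi\left(\frac{x}{2^{il}},\frac{x}{2^{il}}\right)<\infty\quad\text{and}\quad\sum_{i=1}^{\infty}8^{il}\phi\left(\frac{x}{2^{il}},\frac{x}{2^{il}}\right)<\infty$$ for all $x\in X$, and $\lim_{n\to\infty}2^{ln}\phi\left(\frac{x}{2^{ln}},\frac{y}{2^{ln}}\right)=0$ and $\lim_{n\to\infty}8^{ln}\phi\left(\frac{x}{2^{ln}},\frac{y}{2^{ln}}\right)=0$ for all $x,y\in X$. Then there exist a unique additive function $A:X\to Y$ and a unique cubic function $C:X\to Y$ such that $$\|f(x)-A(x)-C(x)\|\le\frac{1}{12}\sum_{i=\frac{|l-1|}{2}}^{\infty}\left(2^{il}+8^{il}\right)\phi\left(\frac{x}{2^{l(i+l)}},\frac{x}{2^{l(i+l)}}\right)$$ for all $x\in X$ (the summation starts at $i=0$ if $l=1$ and at $i=1$ if $l=-1$).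
   Context: For a mapping $f:X\to Y$ define $$D_f(x,y)=3f(x+3y)-f(3x+y)-12[f(x+y)+f(x-y)]+16[f(x)+f(y)]-12f(2y)+4f(2x)$$ for $x,y\in X$. A function $g:X\to Y$ is additive if $g(x+y)=g(x)+g(y)$ for all $x,y\in X$, and cubic if $g(x+2y)-3g(x+y)+3g(x)-g(x-y)=6g(y)$ for all $x,y\in X$. *)

theory Defs
  imports "HOL-Analysis.Analysis"
begin

definition D_f :: "('a::real_vector \<Rightarrow> 'b::real_vector) \<Rightarrow> 'a \<Rightarrow> 'a \<Rightarrow> 'b" where
  "D_f f x y = 3 *\<^sub>R f (x + 3 *\<^sub>R y) - f (3 *\<^sub>R x + y)
     - 12 *\<^sub>R (f (x + y) + f (x - y)) + 16 *\<^sub>R (f x + f y)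
     - 12 *\<^sub>R f (2 *\<^sub>R y) + 4 *\<^sub>R f (2 *\<^sub>R x)"

definition is_additive :: "('a::real_vector \<Rightarrow> 'b::real_vector) \<Rightarrow> bool" where
  "is_additive g \<longleftrightarrow> (\<forall>x y. g (x + y) = g x + g y)"

definition is_cubic :: "('a::real_vector \<Rightarrow> 'b::real_vector) \<Rightarrow> bool" where
  "is_cubic g \<longleftrightarrow> (\<forall>x y. g (x + 2 *\<^sub>R y) - 3 *\<^sub>R g (x + y) + 3 *\<^sub>R g x - g (x - y) = 6 *\<^sub>R g y)"

end

theory Submission
  imports Defs
begin

text \<open>
  Put \<open>a x = f (2x) - 8 f x\<close> and \<open>c x = f (2x) - 2 f x\<close>. Then \<open>f = (c - a) / 6\<close>, and on the
  diagonal \<open>a (2z) - 2 a z = c (2z) - 8 c z = D_f f z z / 2\<close>, so \<open>a\<close> is approximately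
  2-homogeneous and \<open>c\<close> approximately 8-homogeneous. Hyers' direct method (rescaling along
  \<open>x \<mapsto> x/2\<close> for \<open>l = 1\<close> and along \<open>x \<mapsto> 2x\<close> for \<open>l = -1\<close>) turns them into exactly homogeneous
  limits \<open>A\<close>, \<open>C\<close>; the decay hypotheses force \<open>D_f A = D_f C = 0\<close>, and an odd solution of
  \<open>D_f = 0\<close> that is 2- resp. 8-homogeneous is additive resp. cubic. For uniqueness, the difference of
  two such decompositions grows like \<open>2\<^sup>n\<close> and \<open>8\<^sup>n\<close> along the orbit of \<open>x\<close>, while it is bounded
  by tails of the convergent control series.
\<close>

lemma eq_if_linear_functionals_eq:
  fixes a b :: "'b::real_vector"
  assumes "\<And>g::'b \<Rightarrow> real. linear g \<Longrightarrow> g a = g b"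
  shows "a = b"
proof (rule ccontr)
  assume "a \<noteq> b"
  then have "independent {a - b}" by (simp add: independent_insert)
  then obtain g :: "'b \<Rightarrow> real" where "linear g" "g (a - b) = 1"
    using linear_independent_extend[of "{a - b}" "\<lambda>_. 1"] by auto
  with assms[of g] show False by (simp add: linear_diff)
qed

lemma odd_imp_zero:
  fixes f :: "'a::real_vector \<Rightarrow> 'b::real_vector"
  assumes "\<And>x. f (- x) = - f x"
  shows "f 0 = 0"
  using assms[of 0] by (simp add: eq_neg_iff_add_eq_0 flip: scaleR_2)

lemma D_f_linear_comp: "linear g \<Longrightarrow> D_f (\<lambda>x. g (F x)) x y = g (D_f F x y)"
  by (simp add: D_f_def linear_add linear_diff linear_scale)

lemma D_f_scaleR: "D_f (\<lambda>z. c *\<^sub>R F (s *\<^sub>R z)) x y = c *\<^sub>R D_f F (s *\<^sub>R x) (s *\<^sub>R y)"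
  by (simp add: D_f_def algebra_simps)

lemma D_f_diff: "D_f (\<lambda>z. F z - G z) x y = D_f F x y - D_f G x y"
  by (simp add: D_f_def algebra_simps)

lemma D_f_tendsto:
  fixes F :: "nat \<Rightarrow> 'a::real_vector \<Rightarrow> 'b::real_normed_vector"
  assumes "\<And>x. (\<lambda>n. F n x) \<longlonglongrightarrow> G x"
  shows "(\<lambda>n. D_f (F n) x y) \<longlonglongrightarrow> D_f G x y"
  unfolding D_f_def by (intro tendsto_intros assms)

lemma D_f_diag_doubling:
  fixes f :: "'a::real_vector \<Rightarrow> 'b::real_vector"
  assumes "f 0 = 0"
  shows "(f (4 *\<^sub>R z) - 8 *\<^sub>R f (2 *\<^sub>R z)) - 2 *\<^sub>R (f (2 *\<^sub>R z) - 8 *\<^sub>R f z) = (1/2) *\<^sub>R D_f f z z"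
    and "(f (4 *\<^sub>R z) - 2 *\<^sub>R f (2 *\<^sub>R z)) - 8 *\<^sub>R (f (2 *\<^sub>R z) - 2 *\<^sub>R f z) = (1/2) *\<^sub>R D_f f z z"
proof -
  have multiples: "z + 3 *\<^sub>R z = 4 *\<^sub>R z" "3 *\<^sub>R z + z = 4 *\<^sub>R z" "z + z = 2 *\<^sub>R z"
    using scaleR_add_left[of 1 3 z] scaleR_add_left[of 3 1 z] scaleR_add_left[of 1 1 z] by simp_all
  have D: "D_f f z z = 2 *\<^sub>R f (4 *\<^sub>R z) - 20 *\<^sub>R f (2 *\<^sub>R z) + 32 *\<^sub>R f z"
    by (rule eq_if_linear_functionals_eq)
      (simp add: D_f_def multiples assms linear_add linear_diff linear_scale linear_0)
  show "(f (4 *\<^sub>R z) - 8 *\<^sub>R f (2 *\<^sub>R z)) - 2 *\<^sub>R (f (2 *\<^sub>R z) - 8 *\<^sub>R f z) = (1/2) *\<^sub>R D_f f z z"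
       "(f (4 *\<^sub>R z) - 2 *\<^sub>R f (2 *\<^sub>R z)) - 8 *\<^sub>R (f (2 *\<^sub>R z) - 2 *\<^sub>R f z) = (1/2) *\<^sub>R D_f f z z"
    unfolding D by (rule eq_if_linear_functionals_eq, simp add: linear_add linear_diff linear_scale)+
qed

text \<open>
  The solutions of \<open>D_f = 0\<close> are first analysed for real-valued functions, where the relations
  can be combined by linear arithmetic; composing with linear functionals then lifts them to
  arbitrary vector spaces (\<open>eq_if_linear_functionals_eq\<close>).
\<close>

lemma D_f_zero_real_jensen:
  fixes G :: "'a::real_vector \<Rightarrow> real"
  assumes odd: "\<And>x. G (- x) = - G x" and D: "\<And>x y. D_f G x y = 0"
    and double: "\<And>x. G (2 *\<^sub>R x) = 2 * G x"
  shows "G (x + y) + G (x - y) = 2 * G x"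
proof -
  have comm: "b + 3 *\<^sub>R a = 3 *\<^sub>R a + b" "3 *\<^sub>R b + a = a + 3 *\<^sub>R b" "b + a = a + b"
    and neg: "3 *\<^sub>R (- b) + a = a - 3 *\<^sub>R b" "- b + a = a - b" "b - a = - (a - b)"
      "- b - a = - (a + b)" for a b :: 'a
    by (simp_all add: algebra_simps)
  have expand: "3 * G (a + 3 *\<^sub>R b) - G (3 *\<^sub>R a + b) - 12 * G (a + b) - 12 * G (a - b)
      + 24 * G a - 8 * G b = 0" for a b
    using D[of a b] double[of a] double[of b] by (simp add: D_f_def)
  have triple: "G (3 *\<^sub>R a) = 3 * G a" for a
    using expand[of a 0] odd[of 0] by simp
  \<comment> \<open>adding three times the instance at \<open>(b, a)\<close> eliminates \<open>G (a + 3 b)\<close>\<close>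
  have sym: "8 * G (3 *\<^sub>R a + b) = 48 * G (a + b) - 24 * G (a - b) - 64 * G b" for a b
    using expand[of a b] expand[of b a]
    unfolding comm[where a = a and b = b] neg[where a = a and b = b] odd by linarith
  have jensen_inner: "G (3 *\<^sub>R a + b) + G (3 *\<^sub>R a - b) = 3 * (G (a + b) + G (a - b))" for a b
    using sym[of a b] sym[of a "- b"] odd[of b] by (simp add: algebra_simps)
  have jensen_outer: "8 * (G (a + 3 *\<^sub>R b) + G (a - 3 *\<^sub>R b)) = 72 * (G (a + b) + G (a - b)) - 128 * G a"
    for a b
    using sym[of b a] sym[of "- b" a]
    unfolding comm[where a = a and b = b] neg[where a = a and b = b] odd
    by (simp add: algebra_simps)
  have "G (3 *\<^sub>R x + 3 *\<^sub>R y) = 3 * G (x + y)" "G (3 *\<^sub>R x - 3 *\<^sub>R y) = 3 * G (x - y)"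
    using triple[of "x + y"] triple[of "x - y"] by (simp_all add: algebra_simps)
  then show ?thesis using jensen_outer[of "3 *\<^sub>R x" y] jensen_inner[of x y] triple[of x] by simp
qed

lemma D_f_zero_real_cubic:
  fixes G :: "'a::real_vector \<Rightarrow> real"
  assumes odd: "\<And>x. G (- x) = - G x" and D: "\<And>x y. D_f G x y = 0"
    and double: "\<And>x. G (2 *\<^sub>R x) = 8 * G x"
  shows "G (x + 2 *\<^sub>R y) - 3 * G (x + y) + 3 * G x - G (x - y) = 6 * G y"
proof -
  have comm: "b + 3 *\<^sub>R a = 3 *\<^sub>R a + b" "3 *\<^sub>R b + a = a + 3 *\<^sub>R b" "b + a = a + b"
    and neg: "3 *\<^sub>R (- b) + a = a - 3 *\<^sub>R b" "- b + a = a - b" "b - a = - (a - b)"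
      "- b - a = - (a + b)" for a b :: 'a
    by (simp_all add: algebra_simps)
  have expand: "3 * G (a + 3 *\<^sub>R b) - G (3 *\<^sub>R a + b) - 12 * G (a + b) - 12 * G (a - b)
      + 48 * G a - 80 * G b = 0" for a b
    using D[of a b] double[of a] double[of b] by (simp add: D_f_def)
  have sym: "8 * G (3 *\<^sub>R a + b) = 48 * G (a + b) - 24 * G (a - b) + 192 * G a - 64 * G b" for a b
    using expand[of a b] expand[of b a]
    unfolding comm[where a = a and b = b] neg[where a = a and b = b] odd by linarith
  have odd_part: "G (a + 3 *\<^sub>R b) - G (a - 3 *\<^sub>R b) = 3 * G (a + b) - 3 * G (a - b) + 48 * G b" for a b
    using sym[of b a] sym[of "- b" a]
    unfolding comm[where a = a and b = b] neg[where a = a and b = b] odd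
    by (simp add: algebra_simps)
  define w where "w = (1/2::real) *\<^sub>R y"
  have w: "x + w + 3 *\<^sub>R w = x + 2 *\<^sub>R y" "x + w - 3 *\<^sub>R w = x - y" "x + w + w = x + y"
    by (rule eq_if_linear_functionals_eq, simp add: w_def linear_add linear_diff linear_scale)+
  have "G y = 8 * G w" using double[of w] by (simp add: w_def)
  with odd_part[of "x + w" w] show ?thesis unfolding w by simp
qed

lemma is_additive_if_D_f_zero:
  fixes F :: "'a::real_vector \<Rightarrow> 'b::real_vector"
  assumes odd: "\<And>x. F (- x) = - F x" and D: "\<And>x y. D_f F x y = 0"
    and double: "\<And>x. F (2 *\<^sub>R x) = 2 *\<^sub>R F x"
  shows "is_additive F"
  unfolding is_additive_def
proof (intro allI)
  fix x y :: 'a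
  have jensen: "F (u + v) + F (u - v) = 2 *\<^sub>R F u" for u v
  proof (rule eq_if_linear_functionals_eq)
    fix g :: "'b \<Rightarrow> real" assume g: "linear g"
    have "g (F (u + v)) + g (F (u - v)) = 2 * g (F u)"
      by (rule D_f_zero_real_jensen)
        (simp_all add: D_f_linear_comp[OF g] D odd double linear_neg[OF g] linear_scale[OF g] linear_0[OF g])
    then show "g (F (u + v) + F (u - v)) = g (2 *\<^sub>R F u)"
      by (simp add: linear_add[OF g] linear_scale[OF g])
  qed
  let ?u = "(1/2::real) *\<^sub>R (x + y)" and ?v = "(1/2::real) *\<^sub>R (x - y)"
  have "?u + ?v = x" "?u - ?v = y"
    by (simp_all add: algebra_simps flip: scaleR_add_left scaleR_diff_left)
  then show "F (x + y) = F x + F y"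
    using jensen[of ?u ?v] double[of ?u] by simp
qed

lemma is_cubic_if_D_f_zero:
  fixes F :: "'a::real_vector \<Rightarrow> 'b::real_vector"
  assumes odd: "\<And>x. F (- x) = - F x" and D: "\<And>x y. D_f F x y = 0"
    and double: "\<And>x. F (2 *\<^sub>R x) = 8 *\<^sub>R F x"
  shows "is_cubic F"
  unfolding is_cubic_def
proof (intro allI, rule eq_if_linear_functionals_eq)
  fix x y :: 'a and g :: "'b \<Rightarrow> real" assume g: "linear g"
  have "g (F (x + 2 *\<^sub>R y)) - 3 * g (F (x + y)) + 3 * g (F x) - g (F (x - y)) = 6 * g (F y)"
    by (rule D_f_zero_real_cubic)
      (simp_all add: D_f_linear_comp[OF g] D odd double linear_neg[OF g] linear_scale[OF g] linear_0[OF g])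
  then show "g (F (x + 2 *\<^sub>R y) - 3 *\<^sub>R F (x + y) + 3 *\<^sub>R F x - F (x - y)) = g (6 *\<^sub>R F y)"
    by (simp add: linear_add[OF g] linear_diff[OF g] linear_scale[OF g])
qed

lemma is_additive_double:
  assumes "is_additive A" shows "A (2 *\<^sub>R x) = 2 *\<^sub>R A x"
  using assms unfolding is_additive_def by (metis scaleR_2)

lemma is_cubic_double:
  fixes C :: "'a::real_vector \<Rightarrow> 'b::real_vector"
  assumes "is_cubic C" shows "C (2 *\<^sub>R x) = 8 *\<^sub>R C x"
proof (rule eq_if_linear_functionals_eq)
  fix g :: "'b \<Rightarrow> real" assume g: "linear g"
  define c where "c y = g (C y)" for y
  have e: "c (u + 2 *\<^sub>R v) - 3 * c (u + v) + 3 * c u - c (u - v) = 6 * c v" for u v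
    using arg_cong[OF assms[unfolded is_cubic_def, rule_format, of u v], of g]
    by (simp add: c_def linear_add[OF g] linear_diff[OF g] linear_scale[OF g])
  have "c 0 = 0" using e[of 0 0] by simp
  moreover have "- x + 2 *\<^sub>R x = x" "- x - x = - (2 *\<^sub>R x)"
    by (simp_all add: scaleR_2)
  ultimately have "c (- x) = - c x" and "c (2 *\<^sub>R x) - 3 * c x - c (- x) = 6 * c x"
    using e[of 0 x] e[of 0 "- x"] e[of "- x" x] by simp_all
  then show "g (C (2 *\<^sub>R x)) = g (8 *\<^sub>R C x)" by (simp add: c_def linear_scale[OF g])
qed

lemma approx_homogeneous_limit:
  fixes u :: "'a::real_normed_vector \<Rightarrow> 'b::banach" and m r :: real
  assumes m: "0 \<le> m"
    and step: "\<And>x. norm (m *\<^sub>R u (r *\<^sub>R x) - u x) \<le> \<psi> x"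
    and summable: "\<And>x. summable (\<lambda>n. m^n * \<psi> (r^n *\<^sub>R x))"
  obtains A where "\<And>x. (\<lambda>n. m^n *\<^sub>R u (r^n *\<^sub>R x)) \<longlonglongrightarrow> A x"
    and "\<And>x. norm (u x - A x) \<le> (\<Sum>n. m^n * \<psi> (r^n *\<^sub>R x))"
proof -
  define U where "U x n = m^n *\<^sub>R u (r^n *\<^sub>R x)" for x n
  define d where "d x k = U x (Suc k) - U x k" for x k
  have d_le: "norm (d x k) \<le> m^k * \<psi> (r^k *\<^sub>R x)" for x k
  proof -
    have "d x k = m^k *\<^sub>R (m *\<^sub>R u (r *\<^sub>R (r^k *\<^sub>R x)) - u (r^k *\<^sub>R x))"
      by (simp add: d_def U_def algebra_simps)
    then show ?thesis using step[of "r^k *\<^sub>R x"] m by (simp add: mult_left_mono)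
  qed
  have summable_d: "summable (\<lambda>k. norm (d x k))" for x
    by (rule summable_comparison_test[OF _ summable[of x]]) (use d_le in auto)
  have partial_sums: "U x n = u x + (\<Sum>k<n. d x k)" for x n
    unfolding d_def sum_lessThan_telescope by (simp add: U_def)
  show thesis
  proof (rule that)
    show "(\<lambda>n. m^n *\<^sub>R u (r^n *\<^sub>R x)) \<longlonglongrightarrow> u x + suminf (d x)" for x
      using partial_sums[of x] unfolding U_def
      by (simp add: tendsto_add tendsto_const summable_LIMSEQ summable_norm_cancel[OF summable_d])
    show "norm (u x - (u x + suminf (d x))) \<le> (\<Sum>n. m^n * \<psi> (r^n *\<^sub>R x))" for x
      using order_trans[OF summable_norm[OF summable_d] suminf_le[OF d_le summable_d summable]]
      by simp
  qed
qed

lemma limit_homogeneous: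
  fixes u :: "'a::real_vector \<Rightarrow> 'b::real_normed_vector"
  assumes lim: "\<And>x. (\<lambda>n. m^n *\<^sub>R u (r^n *\<^sub>R x)) \<longlonglongrightarrow> A x"
  shows "A x = m *\<^sub>R A (r *\<^sub>R x)"
proof -
  have "(\<lambda>n. m *\<^sub>R (m^n *\<^sub>R u (r^n *\<^sub>R (r *\<^sub>R x)))) \<longlonglongrightarrow> m *\<^sub>R A (r *\<^sub>R x)"
    by (intro tendsto_scaleR tendsto_const lim)
  moreover have "(\<lambda>n. m *\<^sub>R (m^n *\<^sub>R u (r^n *\<^sub>R (r *\<^sub>R x)))) = (\<lambda>n. m^Suc n *\<^sub>R u (r^Suc n *\<^sub>R x))"
    by (simp add: mult.commute)
  ultimately show ?thesis using LIMSEQ_Suc[OF lim[of x]] LIMSEQ_unique by metis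
qed

lemma limit_odd:
  fixes u :: "'a::real_vector \<Rightarrow> 'b::real_normed_vector"
  assumes odd: "\<And>x. u (- x) = - u x"
    and lim: "\<And>x. (\<lambda>n. m^n *\<^sub>R u (r^n *\<^sub>R x)) \<longlonglongrightarrow> A x"
  shows "A (- x) = - A x"
  using lim[of "- x"] tendsto_minus[OF lim[of x]] by (simp add: odd LIMSEQ_unique)

lemma D_f_limit_eq_zero:
  fixes u :: "'a::real_vector \<Rightarrow> 'b::real_normed_vector"
  assumes m: "0 \<le> m"
    and lim: "\<And>x. (\<lambda>n. m^n *\<^sub>R u (r^n *\<^sub>R x)) \<longlonglongrightarrow> A x"
    and bound: "\<And>x y. norm (D_f u x y) \<le> \<psi> x y"
    and decay: "(\<lambda>n. m^n * \<psi> (r^n *\<^sub>R x) (r^n *\<^sub>R y)) \<longlonglongrightarrow> 0"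
  shows "D_f A x y = 0"
proof -
  have "(\<lambda>n. D_f (\<lambda>z. m^n *\<^sub>R u (r^n *\<^sub>R z)) x y) \<longlonglongrightarrow> D_f A x y"
    using lim by (rule D_f_tendsto)
  moreover have "(\<lambda>n. D_f (\<lambda>z. m^n *\<^sub>R u (r^n *\<^sub>R z)) x y) \<longlonglongrightarrow> 0"
  proof (rule Lim_null_comparison[OF always_eventually decay], intro allI)
    fix n
    show "norm (D_f (\<lambda>z. m^n *\<^sub>R u (r^n *\<^sub>R z)) x y) \<le> m^n * \<psi> (r^n *\<^sub>R x) (r^n *\<^sub>R y)"
      using bound[of "r^n *\<^sub>R x" "r^n *\<^sub>R y"] m by (simp add: D_f_scaleR mult_left_mono)
  qed
  ultimately show ?thesis by (rule LIMSEQ_unique)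
qed

lemma norm_D_f_double_minus:
  fixes f :: "'a::real_vector \<Rightarrow> 'b::real_normed_vector"
  assumes "\<And>x y. norm (D_f f x y) \<le> \<phi> x y"
  shows "norm (D_f (\<lambda>z. f (2 *\<^sub>R z) - c *\<^sub>R f z) x y) \<le> \<phi> (2 *\<^sub>R x) (2 *\<^sub>R y) + \<bar>c\<bar> * \<phi> x y"
proof -
  have "D_f (\<lambda>z. f (2 *\<^sub>R z) - c *\<^sub>R f z) x y = D_f f (2 *\<^sub>R x) (2 *\<^sub>R y) - c *\<^sub>R D_f f x y"
    using D_f_scaleR[of 1 f 2] D_f_scaleR[of c f 1] by (simp add: D_f_diff)
  then show ?thesis
    using assms[of x y] assms[of "2 *\<^sub>R x" "2 *\<^sub>R y"]
    by (simp add: order_trans[OF norm_triangle_ineq4] add_mono mult_left_mono)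
qed

lemma double_if_homogeneous:
  fixes F :: "'a::real_vector \<Rightarrow> 'b::real_vector"
  assumes r: "r = 2 \<or> r = inverse 2" and hom: "\<And>x. F x = inverse r ^ k *\<^sub>R F (r *\<^sub>R x)"
  shows "F (2 *\<^sub>R x) = 2 ^ k *\<^sub>R F x"
  using r
proof
  assume "r = 2"
  then have "2 ^ k *\<^sub>R F x = 2 ^ k *\<^sub>R (inverse 2 ^ k *\<^sub>R F (2 *\<^sub>R x))" using hom[of x] by simp
  then show ?thesis by (simp flip: power_mult_distrib)
next
  assume "r = inverse 2"
  then show ?thesis using hom[of "2 *\<^sub>R x"] by (simp only:) simp
qed

lemma power_scaling_if_double:
  fixes F :: "'a::real_vector \<Rightarrow> 'b::real_vector"
  assumes r: "r = 2 \<or> r = inverse 2" and double: "\<And>y. F (2 *\<^sub>R y) = 2 ^ k *\<^sub>R F y"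
  shows "F (r^n *\<^sub>R x) = (r ^ k) ^ n *\<^sub>R F x"
proof -
  have step: "F (r *\<^sub>R y) = r ^ k *\<^sub>R F y" for y
    using r
  proof
    assume "r = inverse 2"
    have "inverse 2 ^ k *\<^sub>R F y = (inverse 2 ^ k * 2 ^ k) *\<^sub>R F (inverse 2 *\<^sub>R y)"
      using double[of "inverse 2 *\<^sub>R y"] by simp
    then show ?thesis unfolding \<open>r = inverse 2\<close> by (simp flip: power_mult_distrib)
  qed (simp add: double)
  show ?thesis
  proof (induction n)
    case (Suc n)
    have "F (r^Suc n *\<^sub>R x) = F (r *\<^sub>R (r^n *\<^sub>R x))" by simp
    also have "\<dots> = (r ^ k) ^ Suc n *\<^sub>R F x" by (simp only: step Suc) simp
    finally show ?case .
  qed simp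
qed

lemma power_combination_eq_zero_lt:
  fixes u v :: "'b::real_normed_vector"
  assumes \<beta>: "0 < \<beta>" "\<beta> < \<alpha>"
    and bound: "\<And>n. norm (\<alpha>^n *\<^sub>R u + \<beta>^n *\<^sub>R v) \<le> N n"
    and decay: "(\<lambda>n. N n / \<beta>^n) \<longlonglongrightarrow> 0"
  shows "u = 0 \<and> v = 0"
proof -
  have "0 < \<alpha>" using \<beta> by simp
  have "(\<lambda>n. u + (\<beta> / \<alpha>)^n *\<^sub>R v) \<longlonglongrightarrow> u + 0 *\<^sub>R v"
    using \<beta> by (intro tendsto_intros LIMSEQ_power_zero) auto
  moreover have "(\<lambda>n. u + (\<beta> / \<alpha>)^n *\<^sub>R v) \<longlonglongrightarrow> 0"
  proof (rule Lim_null_comparison[OF always_eventually decay], intro allI)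
    fix n
    have "\<alpha>^n *\<^sub>R u + \<beta>^n *\<^sub>R v = \<alpha>^n *\<^sub>R (u + (\<beta> / \<alpha>)^n *\<^sub>R v)"
      using \<open>0 < \<alpha>\<close> by (simp add: power_divide scaleR_right_distrib)
    then have "norm (u + (\<beta> / \<alpha>)^n *\<^sub>R v) = norm (\<alpha>^n *\<^sub>R u + \<beta>^n *\<^sub>R v) / \<alpha>^n"
      using \<open>0 < \<alpha>\<close> by simp
    also have "\<dots> \<le> N n / \<alpha>^n" using bound \<open>0 < \<alpha>\<close> by (simp add: divide_right_mono)
    also have "\<dots> \<le> N n / \<beta>^n"
      using \<beta> order_trans[OF norm_ge_zero bound] by (simp add: frac_le power_mono)
    finally show "norm (u + (\<beta> / \<alpha>)^n *\<^sub>R v) \<le> N n / \<beta>^n" .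
  qed
  ultimately have "u = 0" using LIMSEQ_unique by fastforce
  have "(\<lambda>n. v) \<longlonglongrightarrow> 0"
  proof (rule Lim_null_comparison[OF always_eventually decay], intro allI)
    show "norm v \<le> N n / \<beta>^n" for n
      using bound[of n] \<open>u = 0\<close> \<beta> by (simp add: field_simps)
  qed
  with \<open>u = 0\<close> show ?thesis by (simp add: LIMSEQ_const_iff)
qed

lemma power_combination_eq_zero:
  fixes u v :: "'b::real_normed_vector"
  assumes pos: "0 < \<alpha>" "0 < \<beta>" and ne: "\<alpha> \<noteq> \<beta>"
    and bound: "\<And>n. norm (\<alpha>^n *\<^sub>R u + \<beta>^n *\<^sub>R v) \<le> N n"
    and decay: "(\<lambda>n. N n / min \<alpha> \<beta> ^ n) \<longlonglongrightarrow> 0"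
  shows "u = 0 \<and> v = 0"
proof (cases "\<beta> < \<alpha>")
  case True
  then show ?thesis
    using power_combination_eq_zero_lt[of \<beta> \<alpha> u v N] pos bound decay by (simp add: min_def)
next
  case False
  then have "\<alpha> < \<beta>" using ne by simp
  then show ?thesis
    using power_combination_eq_zero_lt[of \<alpha> \<beta> v u N] pos bound decay by (simp add: min_def add.commute)
qed

lemma additive_cubic_unique:
  fixes f A1 A2 C1 C2 :: "'a::real_vector \<Rightarrow> 'b::real_normed_vector"
  assumes r: "r = 2 \<or> r = inverse 2"
    and A: "is_additive A1" "is_additive A2" and C: "is_cubic C1" "is_cubic C2"
    and approx: "\<And>x. norm (f x - A1 x - C1 x) \<le> M x" "\<And>x. norm (f x - A2 x - C2 x) \<le> M x"
    and decay: "\<And>x. (\<lambda>n. M (r^n *\<^sub>R x) / min r (r ^ 3) ^ n) \<longlonglongrightarrow> 0"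
  shows "A1 = A2 \<and> C1 = C2"
proof -
  have "A1 x = A2 x \<and> C1 x = C2 x" for x
  proof -
    have scale_A: "A (r^n *\<^sub>R y) = r^n *\<^sub>R A y" if "is_additive A" for A :: "'a \<Rightarrow> 'b" and n y
      using power_scaling_if_double[OF r, of A 1] is_additive_double[OF that] by simp
    have scale_C: "C (r^n *\<^sub>R y) = (r ^ 3)^n *\<^sub>R C y" if "is_cubic C" for C :: "'a \<Rightarrow> 'b" and n y
      using power_scaling_if_double[OF r, of C 3] is_cubic_double[OF that] by simp
    have "A1 x - A2 x = 0 \<and> C1 x - C2 x = 0"
    proof (rule power_combination_eq_zero)
      show "0 < r" "0 < r ^ 3" using r by auto
      from r show "r \<noteq> r ^ 3" by (elim disjE) (simp_all only:, simp_all add: power_divide)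
      show "norm (r^n *\<^sub>R (A1 x - A2 x) + (r ^ 3)^n *\<^sub>R (C1 x - C2 x)) \<le> 2 * M (r^n *\<^sub>R x)" for n
      proof -
        let ?y = "r^n *\<^sub>R x"
        have "r^n *\<^sub>R (A1 x - A2 x) + (r ^ 3)^n *\<^sub>R (C1 x - C2 x)
            = (f ?y - A2 ?y - C2 ?y) - (f ?y - A1 ?y - C1 ?y)"
          by (simp add: scale_A[OF A(1)] scale_A[OF A(2)] scale_C[OF C(1)] scale_C[OF C(2)]
              algebra_simps)
        then show ?thesis
          using norm_triangle_ineq4 approx[of ?y] by (smt (verit))
      qed
      show "(\<lambda>n. 2 * M (r^n *\<^sub>R x) / min r (r ^ 3) ^ n) \<longlonglongrightarrow> 0"
        using tendsto_mult_right_zero[OF decay[of x], of 2] by simp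
    qed
    then show ?thesis by simp
  qed
  then show ?thesis by auto
qed

lemma weighted_tail_tendsto_zero:
  fixes g w :: "nat \<Rightarrow> real"
  assumes \<rho>: "0 < \<rho>" and g: "\<And>k. 0 \<le> g k"
    and w: "\<And>k. 0 \<le> w k" "\<And>k. w k \<le> c * \<rho>^k"
    and summable: "summable (\<lambda>k. \<rho>^k * g k)"
  shows "(\<lambda>n. \<rho>^n * (\<Sum>k. w k * g (k + n))) \<longlonglongrightarrow> 0"
proof (rule Lim_null_comparison)
  let ?t = "\<lambda>k. \<rho>^k * g k"
  show "(\<lambda>n. c * (\<Sum>k. ?t (k + n))) \<longlonglongrightarrow> 0"
    using tendsto_mult_right_zero[OF suminf_exist_split2[OF summable]] by simp
  show "\<forall>\<^sub>F n in sequentially. norm (\<rho>^n * (\<Sum>k. w k * g (k + n))) \<le> c * (\<Sum>k. ?t (k + n))"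
  proof (intro always_eventually allI)
    fix n
    have tail: "summable (\<lambda>k. c * ?t (k + n))"
      using summable_mult[OF summable_ignore_initial_segment[OF summable]] .
    have le: "\<rho>^n * (w k * g (k + n)) \<le> c * ?t (k + n)" for k
      using mult_right_mono[OF w(2)[of k] g[of "k + n"]] \<rho>
      by (simp add: power_add algebra_simps mult_left_mono)
    have summable_\<rho>wg: "summable (\<lambda>k. \<rho>^n * (w k * g (k + n)))"
      by (rule summable_comparison_test[OF _ tail]) (use le w g \<rho> in auto)
    then have summable_wg: "summable (\<lambda>k. w k * g (k + n))"
      using summable_mult_D \<rho> by force
    have "\<rho>^n * (\<Sum>k. w k * g (k + n)) = (\<Sum>k. \<rho>^n * (w k * g (k + n)))"
      by (rule suminf_mult[OF summable_wg, symmetric])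
    also have "\<dots> \<le> (\<Sum>k. c * ?t (k + n))"
      by (rule suminf_le[OF le summable_\<rho>wg tail])
    also have "\<dots> = c * (\<Sum>k. ?t (k + n))"
      by (rule suminf_mult[OF summable_ignore_initial_segment[OF summable]])
    finally show "norm (\<rho>^n * (\<Sum>k. w k * g (k + n))) \<le> c * (\<Sum>k. ?t (k + n))"
      using summable_wg w g \<rho> by (simp add: suminf_nonneg)
  qed
qed

lemma doubling_defect_limit:
  fixes f :: "'a::real_normed_vector \<Rightarrow> 'b::real_normed_vector"
  assumes u: "u = (\<lambda>x. f (2 *\<^sub>R x) - c *\<^sub>R f x)"
    and odd: "\<And>x. f (- x) = - f x"
    and stab: "\<And>x y. norm (D_f f x y) \<le> \<phi> x y"
    and m: "0 \<le> m"
    and decay: "\<And>x y. (\<lambda>n. m^n * \<phi> (r^n *\<^sub>R x) (r^n *\<^sub>R y)) \<longlonglongrightarrow> 0"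
    and lim: "\<And>x. (\<lambda>n. m^n *\<^sub>R u (r^n *\<^sub>R x)) \<longlonglongrightarrow> A x"
  shows "A (- x) = - A x" and "D_f A x y = 0"
proof -
  show "A (- x) = - A x"
    by (rule limit_odd[OF _ lim]) (simp add: u odd)
  have "(\<lambda>n. m^n * (\<phi> (2 *\<^sub>R r^n *\<^sub>R x) (2 *\<^sub>R r^n *\<^sub>R y) + \<bar>c\<bar> * \<phi> (r^n *\<^sub>R x) (r^n *\<^sub>R y)))
      \<longlonglongrightarrow> 0"
    using tendsto_add[OF decay[of "2 *\<^sub>R x" "2 *\<^sub>R y"] tendsto_mult_right_zero[OF decay[of x y], of "\<bar>c\<bar>"]]
    by (simp add: algebra_simps)
  then show "D_f A x y = 0"
    by (rule D_f_limit_eq_zero[OF m lim norm_D_f_double_minus[OF stab, of c, folded u]])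
qed

lemma norm_sub_le_doubling_defects:
  fixes f :: "'a::real_vector \<Rightarrow> 'b::real_normed_vector"
  shows "norm (f x - (-1/6) *\<^sub>R A - (1/6) *\<^sub>R C)
    \<le> (norm (f (2 *\<^sub>R x) - 8 *\<^sub>R f x - A) + norm (f (2 *\<^sub>R x) - 2 *\<^sub>R f x - C)) / 6"
proof -
  have "f x - (-1/6) *\<^sub>R A - (1/6) *\<^sub>R C
      = (1/6) *\<^sub>R ((f (2 *\<^sub>R x) - 2 *\<^sub>R f x - C) - (f (2 *\<^sub>R x) - 8 *\<^sub>R f x - A))"
    by (rule eq_if_linear_functionals_eq) (simp add: linear_add linear_diff linear_scale linear_neg)
  then show ?thesis
    using norm_triangle_ineq4[of "f (2 *\<^sub>R x) - 2 *\<^sub>R f x - C" "f (2 *\<^sub>R x) - 8 *\<^sub>R f x - A"] by simp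
qed

lemma additive_cubic_approximation:
  fixes f :: "'a::real_normed_vector \<Rightarrow> 'b::banach" and r :: real
  assumes r: "r = 2 \<or> r = inverse 2"
    and odd: "\<And>x. f (- x) = - f x"
    and stab: "\<And>x y. norm (D_f f x y) \<le> \<phi> x y"
    and decay_add: "\<And>x y. (\<lambda>n. inverse r ^ n * \<phi> (r^n *\<^sub>R x) (r^n *\<^sub>R y)) \<longlonglongrightarrow> 0"
    and decay_cub: "\<And>x y. (\<lambda>n. (inverse r ^ 3) ^ n * \<phi> (r^n *\<^sub>R x) (r^n *\<^sub>R y)) \<longlonglongrightarrow> 0"
    and step_add: "\<And>x. norm (inverse r *\<^sub>R (f (2 *\<^sub>R r *\<^sub>R x) - 8 *\<^sub>R f (r *\<^sub>R x))
      - (f (2 *\<^sub>R x) - 8 *\<^sub>R f x)) \<le> \<psi>\<^sub>A x"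
    and step_cub: "\<And>x. norm (inverse r ^ 3 *\<^sub>R (f (2 *\<^sub>R r *\<^sub>R x) - 2 *\<^sub>R f (r *\<^sub>R x))
      - (f (2 *\<^sub>R x) - 2 *\<^sub>R f x)) \<le> \<psi>\<^sub>C x"
    and summable_add: "\<And>x. summable (\<lambda>n. inverse r ^ n * \<psi>\<^sub>A (r^n *\<^sub>R x))"
    and summable_cub: "\<And>x. summable (\<lambda>n. (inverse r ^ 3) ^ n * \<psi>\<^sub>C (r^n *\<^sub>R x))"
  obtains A C where "is_additive A" and "is_cubic C"
    and "\<And>x. norm (f x - A x - C x)
      \<le> ((\<Sum>n. inverse r ^ n * \<psi>\<^sub>A (r^n *\<^sub>R x)) + (\<Sum>n. (inverse r ^ 3) ^ n * \<psi>\<^sub>C (r^n *\<^sub>R x))) / 6"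
proof -
  define a where "a = (\<lambda>x. f (2 *\<^sub>R x) - 8 *\<^sub>R f x)"
  define c where "c = (\<lambda>x. f (2 *\<^sub>R x) - 2 *\<^sub>R f x)"
  have pos: "0 \<le> inverse r" "0 \<le> inverse r ^ 3" using r by auto
  obtain A where lim_A: "\<And>x. (\<lambda>n. inverse r ^ n *\<^sub>R a (r^n *\<^sub>R x)) \<longlonglongrightarrow> A x"
    and approx_A: "\<And>x. norm (a x - A x) \<le> (\<Sum>n. inverse r ^ n * \<psi>\<^sub>A (r^n *\<^sub>R x))"
    using approx_homogeneous_limit[of "inverse r" a r \<psi>\<^sub>A] pos step_add summable_add
    unfolding a_def by blast
  obtain C where lim_C: "\<And>x. (\<lambda>n. (inverse r ^ 3) ^ n *\<^sub>R c (r^n *\<^sub>R x)) \<longlonglongrightarrow> C x"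
    and approx_C: "\<And>x. norm (c x - C x) \<le> (\<Sum>n. (inverse r ^ 3) ^ n * \<psi>\<^sub>C (r^n *\<^sub>R x))"
    using approx_homogeneous_limit[of "inverse r ^ 3" c r \<psi>\<^sub>C] pos step_cub summable_cub
    unfolding c_def by blast
  note A_solves = doubling_defect_limit[OF a_def odd stab pos(1) decay_add lim_A]
  note C_solves = doubling_defect_limit[OF c_def odd stab pos(2) decay_cub lim_C]
  have hom_A: "A x = inverse r ^ 1 *\<^sub>R A (r *\<^sub>R x)" for x
    unfolding power_one_right by (rule limit_homogeneous[OF lim_A])
  have double_A: "A (2 *\<^sub>R x) = 2 *\<^sub>R A x" for x
    using double_if_homogeneous[OF r, of A 1, OF hom_A, of x] by simp
  have double_C: "C (2 *\<^sub>R x) = 2 ^ 3 *\<^sub>R C x" for x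
    using double_if_homogeneous[OF r, of C 3, OF limit_homogeneous[OF lim_C]] .
  show thesis
  proof (rule that)
    show "is_additive (\<lambda>x. (-1/6) *\<^sub>R A x)"
      using A_solves double_A D_f_scaleR[of "-1/6" A 1]
      by (intro is_additive_if_D_f_zero) simp_all
    show "is_cubic (\<lambda>x. (1/6) *\<^sub>R C x)"
      using C_solves double_C D_f_scaleR[of "1/6" C 1]
      by (intro is_cubic_if_D_f_zero) simp_all
    show "norm (f x - (-1/6) *\<^sub>R A x - (1/6) *\<^sub>R C x)
      \<le> ((\<Sum>n. inverse r ^ n * \<psi>\<^sub>A (r^n *\<^sub>R x)) + (\<Sum>n. (inverse r ^ 3) ^ n * \<psi>\<^sub>C (r^n *\<^sub>R x))) / 6"
      for x
      using norm_sub_le_doubling_defects[of f x "A x" "C x"] approx_A[of x] approx_C[of x]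
      unfolding a_def c_def by simp
  qed
qed

text \<open>
  The bound of the theorem is \<open>control_bound (1/2) 1 1 (\<lambda>x. \<phi> (x/2) (x/2))\<close> for \<open>l = 1\<close> and
  \<open>control_bound 2 (1/2) (1/8) (\<lambda>x. \<phi> x x)\<close> for \<open>l = -1\<close>.
\<close>

definition control_bound :: "real \<Rightarrow> real \<Rightarrow> real \<Rightarrow> ('a::real_vector \<Rightarrow> real) \<Rightarrow> 'a \<Rightarrow> real"
  where "control_bound r w\<^sub>A w\<^sub>C \<Phi> x =
    (1/12) * (\<Sum>k. (w\<^sub>A * inverse r ^ k + w\<^sub>C * (inverse r ^ 3) ^ k) * \<Phi> (r^k *\<^sub>R x))"

lemma control_bound_split:
  assumes summable_add: "summable (\<lambda>n. inverse r ^ n * \<Phi> (r^n *\<^sub>R x))"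
    and summable_cub: "summable (\<lambda>n. (inverse r ^ 3) ^ n * \<Phi> (r^n *\<^sub>R x))"
  shows "control_bound r w\<^sub>A w\<^sub>C \<Phi> x = ((\<Sum>n. inverse r ^ n * (w\<^sub>A / 2 * \<Phi> (r^n *\<^sub>R x)))
    + (\<Sum>n. (inverse r ^ 3) ^ n * (w\<^sub>C / 2 * \<Phi> (r^n *\<^sub>R x)))) / 6"
proof -
  have "(\<Sum>k. (w\<^sub>A * inverse r ^ k + w\<^sub>C * (inverse r ^ 3) ^ k) * \<Phi> (r^k *\<^sub>R x))
      = w\<^sub>A * (\<Sum>k. inverse r ^ k * \<Phi> (r^k *\<^sub>R x)) + w\<^sub>C * (\<Sum>k. (inverse r ^ 3) ^ k * \<Phi> (r^k *\<^sub>R x))"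
    using summable_add summable_cub unfolding distrib_right
    by (simp add: suminf_add[symmetric] suminf_mult[symmetric] summable_mult mult.assoc)
  moreover have "(\<Sum>n. inverse r ^ n * (w\<^sub>A / 2 * \<Phi> (r^n *\<^sub>R x)))
      = w\<^sub>A / 2 * (\<Sum>n. inverse r ^ n * \<Phi> (r^n *\<^sub>R x))"
    "(\<Sum>n. (inverse r ^ 3) ^ n * (w\<^sub>C / 2 * \<Phi> (r^n *\<^sub>R x)))
      = w\<^sub>C / 2 * (\<Sum>n. (inverse r ^ 3) ^ n * \<Phi> (r^n *\<^sub>R x))"
    using suminf_mult[OF summable_add, of "w\<^sub>A / 2"] suminf_mult[OF summable_cub, of "w\<^sub>C / 2"]
    by (simp_all add: ac_simps)
  ultimately show ?thesis by (simp add: control_bound_def)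
qed

lemma control_bound_decay:
  fixes \<Phi> :: "'a::real_vector \<Rightarrow> real"
  assumes r: "r = 2 \<or> r = inverse 2"
    and \<Phi>: "\<And>x. 0 \<le> \<Phi> x" and w: "0 \<le> w\<^sub>A" "0 \<le> w\<^sub>C"
    and summable_add: "\<And>x. summable (\<lambda>n. inverse r ^ n * \<Phi> (r^n *\<^sub>R x))"
    and summable_cub: "\<And>x. summable (\<lambda>n. (inverse r ^ 3) ^ n * \<Phi> (r^n *\<^sub>R x))"
  shows "(\<lambda>n. control_bound r w\<^sub>A w\<^sub>C \<Phi> (r^n *\<^sub>R x) / min r (r ^ 3) ^ n) \<longlonglongrightarrow> 0"
proof -
  define w where "w k = w\<^sub>A * inverse r ^ k + w\<^sub>C * (inverse r ^ 3) ^ k" for k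
  obtain \<rho> where \<rho>: "min r (r ^ 3) = inverse \<rho>" "inverse r \<le> \<rho>" "inverse r ^ 3 \<le> \<rho>"
    and summable_\<rho>: "\<And>x. summable (\<lambda>n. \<rho>^n * \<Phi> (r^n *\<^sub>R x))"
    using r
  proof
    assume "r = 2"
    then show thesis using summable_add by (intro that[of "inverse 2"]) (simp_all add: power_divide)
  next
    assume r': "r = inverse 2"
    show thesis by (rule that[of 8]) (use summable_cub in \<open>simp_all add: r' power_divide\<close>)
  qed
  have "0 < inverse r" using r by auto
  then have "0 < \<rho>" using \<rho>(2) by linarith
  have w_nonneg: "0 \<le> w k" for k
    unfolding w_def using w \<open>0 < inverse r\<close> by (intro add_nonneg_nonneg mult_nonneg_nonneg) simp_all
  have w_le: "w k \<le> (w\<^sub>A + w\<^sub>C) * \<rho>^k" for k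
    using \<rho> w \<open>0 < inverse r\<close> unfolding w_def distrib_right
    by (intro add_mono mult_left_mono power_mono) auto
  have "(\<lambda>n. \<rho>^n * (\<Sum>k. w k * \<Phi> (r^(k + n) *\<^sub>R x))) \<longlonglongrightarrow> 0"
    by (rule weighted_tail_tendsto_zero[where g = "\<lambda>k. \<Phi> (r^k *\<^sub>R x)" and c = "w\<^sub>A + w\<^sub>C"])
      (use \<open>0 < \<rho>\<close> \<Phi> w_nonneg w_le summable_\<rho> in auto)
  then have "(\<lambda>n. 1/12 * (\<rho>^n * (\<Sum>k. w k * \<Phi> (r^(k + n) *\<^sub>R x)))) \<longlonglongrightarrow> 0"
    by (rule tendsto_mult_right_zero)
  moreover have "control_bound r w\<^sub>A w\<^sub>C \<Phi> (r^n *\<^sub>R x) / min r (r ^ 3) ^ n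
      = 1/12 * (\<rho>^n * (\<Sum>k. w k * \<Phi> (r^(k + n) *\<^sub>R x)))" for n
  proof -
    have "control_bound r w\<^sub>A w\<^sub>C \<Phi> (r^n *\<^sub>R x) / min r (r ^ 3) ^ n
        = \<rho>^n * control_bound r w\<^sub>A w\<^sub>C \<Phi> (r^n *\<^sub>R x)"
      unfolding \<rho>(1) power_inverse by (simp add: divide_inverse mult.commute)
    also have "\<dots> = 1/12 * (\<rho>^n * (\<Sum>k. w k * \<Phi> (r^(k + n) *\<^sub>R x)))"
      unfolding control_bound_def w_def power_add scaleR_scaleR by (rule mult.left_commute)
    finally show ?thesis .
  qed
  ultimately show ?thesis by (simp only:)
qed

lemma additive_cubic_stability:
  fixes f :: "'a::real_normed_vector \<Rightarrow> 'b::banach" and r w\<^sub>A w\<^sub>C :: real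
  assumes r: "r = 2 \<or> r = inverse 2"
    and odd: "\<And>x. f (- x) = - f x"
    and stab: "\<And>x y. norm (D_f f x y) \<le> \<phi> x y"
    and decay_add: "\<And>x y. (\<lambda>n. inverse r ^ n * \<phi> (r^n *\<^sub>R x) (r^n *\<^sub>R y)) \<longlonglongrightarrow> 0"
    and decay_cub: "\<And>x y. (\<lambda>n. (inverse r ^ 3) ^ n * \<phi> (r^n *\<^sub>R x) (r^n *\<^sub>R y)) \<longlonglongrightarrow> 0"
    and \<Phi>: "\<And>x. 0 \<le> \<Phi> x" and w: "0 \<le> w\<^sub>A" "0 \<le> w\<^sub>C"
    and summable_add: "\<And>x. summable (\<lambda>n. inverse r ^ n * \<Phi> (r^n *\<^sub>R x))"
    and summable_cub: "\<And>x. summable (\<lambda>n. (inverse r ^ 3) ^ n * \<Phi> (r^n *\<^sub>R x))"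
    and step_add: "\<And>x. norm (inverse r *\<^sub>R (f (2 *\<^sub>R r *\<^sub>R x) - 8 *\<^sub>R f (r *\<^sub>R x))
      - (f (2 *\<^sub>R x) - 8 *\<^sub>R f x)) \<le> w\<^sub>A / 2 * \<Phi> x"
    and step_cub: "\<And>x. norm (inverse r ^ 3 *\<^sub>R (f (2 *\<^sub>R r *\<^sub>R x) - 2 *\<^sub>R f (r *\<^sub>R x))
      - (f (2 *\<^sub>R x) - 2 *\<^sub>R f x)) \<le> w\<^sub>C / 2 * \<Phi> x"
  shows "\<exists>A C. is_additive A \<and> is_cubic C \<and>
     (\<forall>x. norm (f x - A x - C x) \<le> control_bound r w\<^sub>A w\<^sub>C \<Phi> x) \<and>
     (\<forall>A' C'. is_additive A' \<and> is_cubic C' \<and>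
        (\<forall>x. norm (f x - A' x - C' x) \<le> control_bound r w\<^sub>A w\<^sub>C \<Phi> x) \<longrightarrow> A' = A \<and> C' = C)"
proof -
  have "summable (\<lambda>n. inverse r ^ n * (w\<^sub>A / 2 * \<Phi> (r^n *\<^sub>R x)))"
    "summable (\<lambda>n. (inverse r ^ 3) ^ n * (w\<^sub>C / 2 * \<Phi> (r^n *\<^sub>R x)))" for x
    using summable_mult[OF summable_add[of x], of "w\<^sub>A / 2"] summable_mult[OF summable_cub[of x], of "w\<^sub>C / 2"]
    by (simp_all add: ac_simps)
  then obtain A C where A: "is_additive A" and C: "is_cubic C"
    and approx: "\<And>x. norm (f x - A x - C x) \<le> ((\<Sum>n. inverse r ^ n * (w\<^sub>A / 2 * \<Phi> (r^n *\<^sub>R x)))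
      + (\<Sum>n. (inverse r ^ 3) ^ n * (w\<^sub>C / 2 * \<Phi> (r^n *\<^sub>R x)))) / 6"
    using additive_cubic_approximation[OF r odd stab decay_add decay_cub step_add step_cub] by blast
  have bound: "norm (f x - A x - C x) \<le> control_bound r w\<^sub>A w\<^sub>C \<Phi> x" for x
    unfolding control_bound_split[OF summable_add summable_cub] by (rule approx)
  note decay = control_bound_decay[OF r \<Phi> w summable_add summable_cub]
  show ?thesis
    using A C bound additive_cubic_unique[OF r _ A _ C _ bound decay] by blast
qed

lemma additive_cubic_stability_halving:
  fixes f :: "'a::real_normed_vector \<Rightarrow> 'b::banach"
    and \<phi> :: "'a \<Rightarrow> 'a \<Rightarrow> real"
  assumes odd: "\<And>x. f (- x) = - f x"
    and phi_nonneg: "\<And>x y. \<phi> x y \<ge> 0"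
    and stab: "\<And>x y. norm (D_f f x y) \<le> \<phi> x y"
    and sum2: "\<And>x. summable (\<lambda>i. (2::real) ^ Suc i *
      \<phi> (inverse (2 ^ Suc i) *\<^sub>R x) (inverse (2 ^ Suc i) *\<^sub>R x))"
    and sum8: "\<And>x. summable (\<lambda>i. (8::real) ^ Suc i *
      \<phi> (inverse (2 ^ Suc i) *\<^sub>R x) (inverse (2 ^ Suc i) *\<^sub>R x))"
    and lim2: "\<And>x y. (\<lambda>n. (2::real) ^ n * \<phi> (inverse (2 ^ n) *\<^sub>R x) (inverse (2 ^ n) *\<^sub>R y)) \<longlonglongrightarrow> 0"
    and lim8: "\<And>x y. (\<lambda>n. (8::real) ^ n * \<phi> (inverse (2 ^ n) *\<^sub>R x) (inverse (2 ^ n) *\<^sub>R y)) \<longlonglongrightarrow> 0"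
  shows "\<exists>A C. is_additive A \<and> is_cubic C \<and>
     (\<forall>x. norm (f x - A x - C x) \<le> (1/12) *
        (\<Sum>k. ((2::real) ^ k + 8 ^ k) * \<phi> (inverse (2 ^ Suc k) *\<^sub>R x) (inverse (2 ^ Suc k) *\<^sub>R x))) \<and>
     (\<forall>A' C'. is_additive A' \<and> is_cubic C' \<and>
        (\<forall>x. norm (f x - A' x - C' x) \<le> (1/12) *
          (\<Sum>k. ((2::real) ^ k + 8 ^ k) * \<phi> (inverse (2 ^ Suc k) *\<^sub>R x) (inverse (2 ^ Suc k) *\<^sub>R x)))
        \<longrightarrow> A' = A \<and> C' = C)"
proof -
  have f0: "f 0 = 0" using odd by (rule odd_imp_zero)
  have step_add: "norm (2 *\<^sub>R (f (2 *\<^sub>R z) - 8 *\<^sub>R f z) - (f (4 *\<^sub>R z) - 8 *\<^sub>R f (2 *\<^sub>R z)))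
      \<le> 1 / 2 * \<phi> z z"
    and step_cub: "norm (8 *\<^sub>R (f (2 *\<^sub>R z) - 2 *\<^sub>R f z) - (f (4 *\<^sub>R z) - 2 *\<^sub>R f (2 *\<^sub>R z)))
      \<le> 1 / 2 * \<phi> z z" for z
    using stab[of z z]
    unfolding norm_minus_commute[of "2 *\<^sub>R _"] norm_minus_commute[of "8 *\<^sub>R _"]
      D_f_diag_doubling[where f = f and z = z, OF f0]
    by simp_all
  let ?M = "control_bound (inverse 2) 1 1 (\<lambda>x. \<phi> (inverse 2 *\<^sub>R x) (inverse 2 *\<^sub>R x))"
  have "\<exists>A C. is_additive A \<and> is_cubic C \<and> (\<forall>x. norm (f x - A x - C x) \<le> ?M x) \<and>
     (\<forall>A' C'. is_additive A' \<and> is_cubic C' \<and> (\<forall>x. norm (f x - A' x - C' x) \<le> ?M x)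
        \<longrightarrow> A' = A \<and> C' = C)"
  proof (rule additive_cubic_stability)
    show "norm (inverse (inverse 2) *\<^sub>R (f (2 *\<^sub>R inverse 2 *\<^sub>R x) - 8 *\<^sub>R f (inverse 2 *\<^sub>R x))
      - (f (2 *\<^sub>R x) - 8 *\<^sub>R f x)) \<le> 1 / 2 * \<phi> (inverse 2 *\<^sub>R x) (inverse 2 *\<^sub>R x)" for x
      using step_add[of "inverse 2 *\<^sub>R x"] by simp
    show "norm (inverse (inverse 2) ^ 3 *\<^sub>R (f (2 *\<^sub>R inverse 2 *\<^sub>R x) - 2 *\<^sub>R f (inverse 2 *\<^sub>R x))
      - (f (2 *\<^sub>R x) - 2 *\<^sub>R f x)) \<le> 1 / 2 * \<phi> (inverse 2 *\<^sub>R x) (inverse 2 *\<^sub>R x)" for x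
      using step_cub[of "inverse 2 *\<^sub>R x"] by simp
  qed (use odd stab phi_nonneg lim2 lim8 summable_divide[OF sum2, where c = 2] summable_divide[OF sum8, where c = 8]
      in \<open>simp_all add: power_divide inverse_eq_divide\<close>)
  then show ?thesis by (simp add: control_bound_def power_divide inverse_eq_divide)
qed

lemma additive_cubic_stability_doubling:
  fixes f :: "'a::real_normed_vector \<Rightarrow> 'b::banach"
    and \<phi> :: "'a \<Rightarrow> 'a \<Rightarrow> real"
  assumes odd: "\<And>x. f (- x) = - f x"
    and phi_nonneg: "\<And>x y. \<phi> x y \<ge> 0"
    and stab: "\<And>x y. norm (D_f f x y) \<le> \<phi> x y"
    and sum2: "\<And>x. summable (\<lambda>i. inverse ((2::real) ^ Suc i) *
      \<phi> (2 ^ Suc i *\<^sub>R x) (2 ^ Suc i *\<^sub>R x))"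
    and sum8: "\<And>x. summable (\<lambda>i. inverse ((8::real) ^ Suc i) *
      \<phi> (2 ^ Suc i *\<^sub>R x) (2 ^ Suc i *\<^sub>R x))"
    and lim2: "\<And>x y. (\<lambda>n. inverse ((2::real) ^ n) * \<phi> (2 ^ n *\<^sub>R x) (2 ^ n *\<^sub>R y)) \<longlonglongrightarrow> 0"
    and lim8: "\<And>x y. (\<lambda>n. inverse ((8::real) ^ n) * \<phi> (2 ^ n *\<^sub>R x) (2 ^ n *\<^sub>R y)) \<longlonglongrightarrow> 0"
  shows "\<exists>A C. is_additive A \<and> is_cubic C \<and>
     (\<forall>x. norm (f x - A x - C x) \<le> (1/12) *
        (\<Sum>k. (inverse ((2::real) ^ Suc k) + inverse (8 ^ Suc k)) * \<phi> (2 ^ k *\<^sub>R x) (2 ^ k *\<^sub>R x))) \<and>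
     (\<forall>A' C'. is_additive A' \<and> is_cubic C' \<and>
        (\<forall>x. norm (f x - A' x - C' x) \<le> (1/12) *
          (\<Sum>k. (inverse ((2::real) ^ Suc k) + inverse (8 ^ Suc k)) * \<phi> (2 ^ k *\<^sub>R x) (2 ^ k *\<^sub>R x)))
        \<longrightarrow> A' = A \<and> C' = C)"
proof -
  have f0: "f 0 = 0" using odd by (rule odd_imp_zero)
  have contract: "inverse 2 *\<^sub>R P - Q = inverse 2 *\<^sub>R (P - 2 *\<^sub>R Q)"
    "inverse 8 *\<^sub>R P - Q = inverse 8 *\<^sub>R (P - 8 *\<^sub>R Q)" for P Q :: 'b
    by (simp_all add: scaleR_diff_right)
  have step_add: "norm (inverse 2 *\<^sub>R (f (4 *\<^sub>R x) - 8 *\<^sub>R f (2 *\<^sub>R x)) - (f (2 *\<^sub>R x) - 8 *\<^sub>R f x))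
      \<le> 1 / 4 * \<phi> x x"
    and step_cub: "norm (inverse 8 *\<^sub>R (f (4 *\<^sub>R x) - 2 *\<^sub>R f (2 *\<^sub>R x)) - (f (2 *\<^sub>R x) - 2 *\<^sub>R f x))
      \<le> 1 / 16 * \<phi> x x" for x
    using stab[of x x]
    unfolding contract D_f_diag_doubling[where f = f and z = x, OF f0]
    by simp_all
  have inverse_cube: "inverse 2 ^ 3 = (inverse 8 :: real)" by (simp add: power_divide)
  have shift: "summable (\<lambda>n. c ^ n * \<phi> (2 ^ n *\<^sub>R x) (2 ^ n *\<^sub>R x))"
    if "summable (\<lambda>i. c ^ Suc i * \<phi> (2 ^ Suc i *\<^sub>R x) (2 ^ Suc i *\<^sub>R x))" for c :: real and x
    using that by (rule summable_Suc_iff[where f = "\<lambda>n. c ^ n * \<phi> (2 ^ n *\<^sub>R x) (2 ^ n *\<^sub>R x)", THEN iffD1])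
  let ?M = "control_bound 2 (1/2) (1/8) (\<lambda>x. \<phi> x x)"
  have "\<exists>A C. is_additive A \<and> is_cubic C \<and> (\<forall>x. norm (f x - A x - C x) \<le> ?M x) \<and>
     (\<forall>A' C'. is_additive A' \<and> is_cubic C' \<and> (\<forall>x. norm (f x - A' x - C' x) \<le> ?M x)
        \<longrightarrow> A' = A \<and> C' = C)"
  proof (rule additive_cubic_stability)
    show "summable (\<lambda>n. inverse 2 ^ n * \<phi> (2 ^ n *\<^sub>R x) (2 ^ n *\<^sub>R x))" for x
      using sum2[of x] by (intro shift) (simp only: power_inverse)
    show "summable (\<lambda>n. (inverse 2 ^ 3) ^ n * \<phi> (2 ^ n *\<^sub>R x) (2 ^ n *\<^sub>R x))" for x
      using sum8[of x] by (intro shift) (unfold inverse_cube, simp only: power_inverse)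
  qed (use odd stab phi_nonneg lim2 lim8 step_add step_cub in \<open>simp_all add: power_divide inverse_eq_divide\<close>)
  then show ?thesis by (simp add: control_bound_def power_divide inverse_eq_divide)
qed

theorem theorem3p3:
  fixes f :: "'a::real_normed_vector \<Rightarrow> 'b::banach"
    and \<phi> :: "'a \<Rightarrow> 'a \<Rightarrow> real"
    and l :: int
  assumes l: "l \<in> {-1, 1}"
    and odd: "\<forall>x. f (- x) = - f x"
    and phi_nonneg: "\<forall>x y. \<phi> x y \<ge> 0"
    and stab: "\<forall>x y. norm (D_f f x y) \<le> \<phi> x y"
    and sum2: "\<forall>x. summable (\<lambda>i::nat. (2::real) powi (int (Suc i) * l) *
                  \<phi> (inverse ((2::real) powi (int (Suc i) * l)) *\<^sub>R x)
                    (inverse ((2::real) powi (int (Suc i) * l)) *\<^sub>R x))"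
    and sum8: "\<forall>x. summable (\<lambda>i::nat. (8::real) powi (int (Suc i) * l) *
                  \<phi> (inverse ((2::real) powi (int (Suc i) * l)) *\<^sub>R x)
                    (inverse ((2::real) powi (int (Suc i) * l)) *\<^sub>R x))"
    and lim2: "\<forall>x y. (\<lambda>n::nat. (2::real) powi (l * int n) *
                  \<phi> (inverse ((2::real) powi (l * int n)) *\<^sub>R x)
                    (inverse ((2::real) powi (l * int n)) *\<^sub>R y)) \<longlonglongrightarrow> 0"
    and lim8: "\<forall>x y. (\<lambda>n::nat. (8::real) powi (l * int n) *
                  \<phi> (inverse ((2::real) powi (l * int n)) *\<^sub>R x)
                    (inverse ((2::real) powi (l * int n)) *\<^sub>R y)) \<longlonglongrightarrow> 0"
  shows "\<exists>A C. is_additive A \<and> is_cubic C \<and>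
     (\<forall>x. norm (f x - A x - C x) \<le> (1/12) *
        (\<Sum>k. let i = int k + \<bar>l - 1\<bar> div 2 in
           ((2::real) powi (i * l) + (8::real) powi (i * l)) *
           \<phi> (inverse ((2::real) powi (l * (i + l))) *\<^sub>R x)
             (inverse ((2::real) powi (l * (i + l))) *\<^sub>R x))) \<and>
     (\<forall>A' C'. is_additive A' \<and> is_cubic C' \<and>
        (\<forall>x. norm (f x - A' x - C' x) \<le> (1/12) *
          (\<Sum>k. let i = int k + \<bar>l - 1\<bar> div 2 in
             ((2::real) powi (i * l) + (8::real) powi (i * l)) *
             \<phi> (inverse ((2::real) powi (l * (i + l))) *\<^sub>R x)
               (inverse ((2::real) powi (l * (i + l))) *\<^sub>R x)))
        \<longrightarrow> A' = A \<and> C' = C)"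
proof -
  note hyps = odd[rule_format] phi_nonneg[rule_format] stab[rule_format]
  from l consider "l = 1" | "l = -1" by auto
  then show ?thesis
  proof cases
    case 1
    then show ?thesis
      using additive_cubic_stability_halving[OF hyps] sum2 sum8 lim2 lim8
      by (simp add: Let_def power_int_add)
  next
    case 2
    then show ?thesis
      using additive_cubic_stability_doubling[OF hyps] sum2 sum8 lim2 lim8
      by (simp add: Let_def power_int_add power_int_minus power_int_diff inverse_eq_divide mult.commute)
  qed
qed

end
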